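(* Let $R$ (red) and $B$ (blue) be finite sets of points in the plane with $S=B\cup R$ in general position, $r=|R|$ and $|B|=r+2\delta$ for an integer $\delta\ge 0$. Let $k\ge 0$ be an integer. (i) In an $R^k$-rotation, every transition $\delta\rightsquigarrow\delta+1$ or $\delta+1\rightsquigarrow\delta$ of $\omega(R^k_t)$, occurring at angle $t_0$, occurs through a balanced line, i.e. the line $R^k_{t_0}$ is a balanced line. (ii) In a $B^k$-rotation, every transition $\delta\rightsquigarrow\delta-1$ or $\delta-1\rightsquigarrow\delta$ of $\omega(B^k_t)$, occurring at angle $t_0$, occurs through a balanced line, i.e. the line $B^k_{t_0}$ is a balanced line.
   Context: General position means no three points of $S$ are collinear. Coordinates are chosen so that all points of $S$ have distinct abscissae. Each blue point has weight $\omega(p)=+1$ and each red point has weight $\omega(q)=-1$. For an open halfplane $H$, $\omega(H)=\sum_{s\in S\cap H}\omega(s)$. For a directed line $\ell$, $\ell^+$ and $\ell^-$ denote the open halfplanes to the right and to the left of $\ell$, and $\omega(\ell):=\omega(\ell^+)$. A line determined by two points of $S$ is balanced if both open halfplanes it bounds have weight $\delta$. For $P\subseteq S$ and an integer $k$, a $P^k$-rotation is a family of directed lines $P^k_t$, $t\in[0,2\pi]$, where $t$ is the angle of the direction of the line measured from the vertical axis, such that $P^k_0$ contains exactly one point of $P$, and as $t$ increases the line rotates counterclockwise so that (i) $|P\cap P^k_t|=1$ except for finitely many values of $t$ at which $|P\cap P^k_t|=2$, and (ii) whenever $|P\cap P^k_t|=1$, exactly $k$ points of $P$ lie to the right of $P^k_t$.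 The point of $P$ on the line (the pivot) changes exactly when the line contains two points of $P$; $P^k_0=P^k_{2\pi}$. A transition $a\rightsquigarrow a'$ of $\omega(P^k_t)$ at angle $t_0$ means that $\omega(P^k_t)=a$ for all $t<t_0$ sufficiently close to $t_0$ and $\omega(P^k_t)=a'$ for all $t>t_0$ sufficiently close to $t_0$ (angles taken cyclically). *)

theory Defs
  imports "HOL-Analysis.Analysis"
begin

type_synonym pt = "real \<times> real"

text \<open>A directed line with direction angle t (measured counterclockwise from the
  vertical axis, direction vector (-sin t, cos t)) is described by an offset c:
  it is the set of points p with cos t * x(p) + sin t * y(p) = c.\<close>

definition nval :: "real \<Rightarrow> pt \<Rightarrow> real" where
  "nval t p = cos t * fst p + sin t * snd p"

definition dline :: "real \<Rightarrow> real \<Rightarrow> pt set" where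
  "dline t c = {p. nval t p = c}"

definition right_hp :: "real \<Rightarrow> real \<Rightarrow> pt set" where
  "right_hp t c = {p. nval t p > c}"

definition left_hp :: "real \<Rightarrow> real \<Rightarrow> pt set" where
  "left_hp t c = {p. nval t p < c}"

definition weight :: "pt set \<Rightarrow> pt set \<Rightarrow> pt set \<Rightarrow> int" where
  "weight B R H = int (card (B \<inter> H)) - int (card (R \<inter> H))"

definition general_position :: "pt set \<Rightarrow> bool" where
  "general_position S \<longleftrightarrow>
     (\<forall>p\<in>S. \<forall>q\<in>S. \<forall>r\<in>S. p \<noteq> q \<and> p \<noteq> r \<and> q \<noteq> r \<longrightarrow>
        (fst q - fst p) * (snd r - snd p) \<noteq> (snd q - snd p) * (fst r - fst p))"

text \<open>A P^k-rotation, given by the offset function c on [0, 2 pi]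
  (the line at angle t is dline t (c t)); the line moves continuously.\<close>
definition is_rotation :: "pt set \<Rightarrow> nat \<Rightarrow> (real \<Rightarrow> real) \<Rightarrow> bool" where
  "is_rotation P k c \<longleftrightarrow>
     continuous_on {0..2*pi} c \<and>
     c 0 = c (2*pi) \<and>
     card (P \<inter> dline 0 (c 0)) = 1 \<and>
     (\<forall>t\<in>{0..2*pi}. card (P \<inter> dline t (c t)) \<in> {1, 2}) \<and>
     finite {t\<in>{0..2*pi}. card (P \<inter> dline t (c t)) = 2} \<and>
     (\<forall>t\<in>{0..2*pi}. card (P \<inter> dline t (c t)) = 1 \<longrightarrow> card (P \<inter> right_hp t (c t)) = k)"

definition cyc :: "(real \<Rightarrow> real) \<Rightarrow> real \<Rightarrow> real" where
  "cyc c t = c (t - 2*pi * of_int \<lfloor>t / (2*pi)\<rfloor>)"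

definition rot_weight :: "pt set \<Rightarrow> pt set \<Rightarrow> (real \<Rightarrow> real) \<Rightarrow> real \<Rightarrow> int" where
  "rot_weight B R c t = weight B R (right_hp t (cyc c t))"

definition transition :: "pt set \<Rightarrow> pt set \<Rightarrow> (real \<Rightarrow> real) \<Rightarrow> real \<Rightarrow> int \<Rightarrow> int \<Rightarrow> bool" where
  "transition B R c t0 a a' \<longleftrightarrow>
     (\<forall>\<^sub>F t in at_left t0. rot_weight B R c t = a) \<and>
     (\<forall>\<^sub>F t in at_right t0. rot_weight B R c t = a')"

definition balanced :: "pt set \<Rightarrow> pt set \<Rightarrow> int \<Rightarrow> real \<Rightarrow> real \<Rightarrow> bool" where
  "balanced B R \<delta> t c \<longleftrightarrow>
     (\<exists>p\<in>B \<union> R. \<exists>q\<in>B \<union> R. p \<noteq> q \<and> p \<in> dline t c \<and> q \<in> dline t c) \<and>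
     weight B R (right_hp t c) = \<delta> \<and> weight B R (left_hp t c) = \<delta>"

end

theory Submission
  imports Defs
begin

text \<open>For t \<noteq> t0 close to t0 every point off the line at t0
  stays on its side, and the rotating line contains only one point of the rotating colour (two
  points cannot lie on common lines of two directions less than pi apart), so exactly k of them
  lie to its right. Hence the weight can only change through points of the other colour on the
  line at t0. A transition forces such a point b; by general position the line at t0 then
  contains exactly b and the pivot p, so near t0 the weight takes only the values w and w + 1,
  where w is the weight of the right halfplane at t0. A transition between e and e + 1 therefore
  gives w = e, and since b and p are the only points on the line, the left halfplane has weight
  2e - w = e as well. Swapping the colours negates all weights, which turns (ii) into (i).\<close>

lemma nval_periodic: "nval (t - 2*pi * of_int n) p = nval t p"
  unfolding nval_def by (simp add: cos_diff sin_diff)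

lemma cyc_reduced_angle:
  fixes t :: real
  defines "t' \<equiv> t - 2*pi * of_int \<lfloor>t / (2*pi)\<rfloor>"
  shows "t' \<in> {0..2*pi}" and "cyc c t = c t'"
    and "dline t (cyc c t) = dline t' (c t')" and "right_hp t (cyc c t) = right_hp t' (c t')"
proof -
  define n where "n = \<lfloor>t / (2*pi)\<rfloor>"
  have "2*pi * of_int n \<le> 2*pi * (t / (2*pi))"
    unfolding n_def by (intro mult_left_mono) simp_all
  moreover have "2*pi * (t / (2*pi)) < 2*pi * (of_int n + 1)"
    unfolding n_def by (intro mult_strict_left_mono) simp_all
  ultimately show "t' \<in> {0..2*pi}"
    unfolding t'_def n_def[symmetric] by (simp add: algebra_simps)
  show "cyc c t = c t'"
    unfolding cyc_def t'_def ..
  then show "dline t (cyc c t) = dline t' (c t')" "right_hp t (cyc c t) = right_hp t' (c t')"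
    unfolding dline_def right_hp_def t'_def nval_periodic by simp_all
qed

lemma cyc_eq:
  assumes "c 0 = c (2*pi)" and "t \<in> {0..2*pi}"
  shows "cyc c t = c t"
proof (cases "t = 2*pi")
  case False
  with assms(2) have "\<lfloor>t / (2*pi)\<rfloor> = 0"
    by (auto simp: floor_eq_iff field_simps)
  then show ?thesis by (simp add: cyc_def)
qed (simp add: cyc_def assms(1))

lemma cyc_add_period: "cyc c (t + 2*pi) = cyc c t"
proof -
  have "\<lfloor>(t + 2*pi) / (2*pi)\<rfloor> = \<lfloor>t / (2*pi)\<rfloor> + 1"
    by (simp add: add_divide_distrib)
  then show ?thesis by (simp add: cyc_def algebra_simps)
qed

lemma isCont_cyc:
  assumes cont: "continuous_on {0..2*pi} c" and periodic: "c 0 = c (2*pi)"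
    and t0: "t0 \<in> {0..2*pi}"
  shows "isCont (cyc c) t0"
proof -
  have mid: "continuous_on {0..2*pi} (cyc c)"
    using cont by (rule continuous_on_eq) (simp add: cyc_eq[OF periodic])
  have "continuous_on {-2*pi..0} (\<lambda>t. cyc c (t + 2*pi))"
    by (rule continuous_on_compose2[OF mid]) (auto intro!: continuous_intros)
  then have left: "continuous_on {-2*pi..0} (cyc c)"
    by (simp add: cyc_add_period)
  have "continuous_on {2*pi..4*pi} (\<lambda>t. cyc c (t - 2*pi))"
    by (rule continuous_on_compose2[OF mid]) (auto intro!: continuous_intros)
  then have right: "continuous_on {2*pi..4*pi} (cyc c)"
    by (rule continuous_on_eq) (metis cyc_add_period diff_add_cancel)
  have "continuous_on ({-2*pi..0} \<union> {0..2*pi} \<union> {2*pi..4*pi}) (cyc c)"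
    by (intro continuous_on_closed_Un left mid right) auto
  moreover have "{-2*pi..0} \<union> {0..2*pi} \<union> {2*pi..4*pi} = {-2*pi..4*pi}"
    by auto
  ultimately have "continuous_on {-2*pi<..<4*pi} (cyc c)"
    by (auto elim: continuous_on_subset)
  moreover have "t0 \<in> {-2*pi<..<4*pi}"
    using t0 pi_gt_zero unfolding greaterThanLessThan_iff atLeastAtMost_iff by linarith
  ultimately show ?thesis
    by (simp add: continuous_on_eq_continuous_at)
qed

lemma general_position_no_three_on_dline:
  assumes gp: "general_position S" and "p \<in> S" "q \<in> S" "r \<in> S"
    and "p \<noteq> q" "p \<noteq> r" "q \<noteq> r"
    and on: "p \<in> dline t c" "q \<in> dline t c" "r \<in> dline t c"
  shows False
proof -
  define a1 where "a1 = fst q - fst p"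
  define a2 where "a2 = snd q - snd p"
  define b1 where "b1 = fst r - fst p"
  define b2 where "b2 = snd r - snd p"
  have a: "cos t * a1 + sin t * a2 = 0" and b: "cos t * b1 + sin t * b2 = 0"
    using on unfolding dline_def nval_def a1_def a2_def b1_def b2_def
    by (auto simp: algebra_simps)
  \<comment> \<open>both differences are orthogonal to the unit normal, so their cross product vanishes\<close>
  have "a1 * b2 - a2 * b1 = (cos t ^ 2 + sin t ^ 2) * (a1 * b2 - a2 * b1)"
    by simp
  also have "\<dots> = cos t * (b2 * (cos t * a1 + sin t * a2) - a2 * (cos t * b1 + sin t * b2))
      + sin t * (a1 * (cos t * b1 + sin t * b2) - b1 * (cos t * a1 + sin t * a2))"
    by algebra
  finally have "a1 * b2 - a2 * b1 = 0"
    using a b by simp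
  then have "a1 * b2 = a2 * b1" by simp
  moreover have "a1 * b2 \<noteq> a2 * b1"
    using gp assms(2-7) unfolding general_position_def a1_def a2_def b1_def b2_def by blast
  ultimately show False by contradiction
qed

lemma nval_eq_at_two_angles_imp_eq:
  assumes "nval t0 p = nval t0 q" and "nval t p = nval t q"
    and "t \<noteq> t0" and "\<bar>t - t0\<bar> < pi"
  shows "p = q"
proof -
  define d1 where "d1 = fst p - fst q"
  define d2 where "d2 = snd p - snd q"
  have e0: "cos t0 * d1 + sin t0 * d2 = 0" and e: "cos t * d1 + sin t * d2 = 0"
    using assms(1,2) unfolding nval_def d1_def d2_def by (simp_all add: algebra_simps)
  \<comment> \<open>the normals at t0 and t have determinant sin (t - t0)\<close>
  have "sin (t - t0) \<noteq> 0"
    using sin_eq_0_pi[of "t - t0"] assms(3,4) by (auto simp: abs_less_iff)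
  moreover have "d1 * sin (t - t0) = sin t * (cos t0 * d1 + sin t0 * d2) - sin t0 * (cos t * d1 + sin t * d2)"
    by (simp add: sin_diff algebra_simps)
  with e0 e have "d1 * sin (t - t0) = 0"
    by simp
  moreover have "d2 * sin (t - t0) = cos t0 * (cos t * d1 + sin t * d2) - cos t * (cos t0 * d1 + sin t0 * d2)"
    by (simp add: sin_diff algebra_simps)
  with e0 e have "d2 * sin (t - t0) = 0"
    by simp
  ultimately have "d1 = 0" "d2 = 0"
    by simp_all
  then show "p = q"
    unfolding d1_def d2_def by (simp add: prod_eq_iff)
qed

lemma card_split_by_dline:
  assumes "finite X"
  shows "card X = card (X \<inter> right_hp t c) + card (X \<inter> left_hp t c) + card (X \<inter> dline t c)"
proof -
  have "X = (X \<inter> right_hp t c \<union> X \<inter> left_hp t c) \<union> X \<inter> dline t c"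
    unfolding right_hp_def left_hp_def dline_def by auto
  also have "card \<dots> = card (X \<inter> right_hp t c \<union> X \<inter> left_hp t c) + card (X \<inter> dline t c)"
    using assms by (intro card_Un_disjoint) (auto simp: right_hp_def left_hp_def dline_def)
  also have "card (X \<inter> right_hp t c \<union> X \<inter> left_hp t c) = card (X \<inter> right_hp t c) + card (X \<inter> left_hp t c)"
    using assms by (intro card_Un_disjoint) (auto simp: right_hp_def left_hp_def)
  finally show ?thesis .
qed

lemma eventually_same_side:
  assumes "isCont f t0" and "s \<notin> dline t0 (f t0)"
  shows "\<forall>\<^sub>F t in at t0. s \<notin> dline t (f t) \<and> (s \<in> right_hp t (f t) \<longleftrightarrow> s \<in> right_hp t0 (f t0))"
proof -
  have lim: "((\<lambda>t. nval t s - f t) \<longlongrightarrow> nval t0 s - f t0) (at t0)"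
    using assms(1) unfolding nval_def isCont_def by (intro tendsto_intros)
  moreover have "nval t0 s - f t0 > 0 \<or> nval t0 s - f t0 < 0"
    using assms(2) unfolding dline_def by auto
  ultimately show ?thesis
  proof (elim disjE)
    assume "nval t0 s - f t0 > 0"
    with order_tendstoD(1)[OF lim, of 0] show ?thesis
      unfolding dline_def right_hp_def by (auto elim: eventually_mono)
  next
    assume "nval t0 s - f t0 < 0"
    with order_tendstoD(2)[OF lim, of 0] show ?thesis
      unfolding dline_def right_hp_def by (auto elim: eventually_mono)
  qed
qed

lemma rotation_line_card:
  assumes "is_rotation P k c"
  shows "card (P \<inter> dline t (cyc c t)) \<in> {1, 2}"
  using assms cyc_reduced_angle(1)[of t] cyc_reduced_angle(3)[of t c]
  unfolding is_rotation_def by auto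

lemma rotation_right_card:
  assumes "is_rotation P k c" and "card (P \<inter> dline t (cyc c t)) = 1"
  shows "card (P \<inter> right_hp t (cyc c t)) = k"
  using assms cyc_reduced_angle(1)[of t] cyc_reduced_angle(3,4)[of t c]
  unfolding is_rotation_def by auto

lemma eventually_value_mem:
  assumes "F \<noteq> bot" and "\<forall>\<^sub>F x in F. f x = a" and "\<forall>\<^sub>F x in F. f x \<in> X"
  shows "a \<in> X"
  using eventually_happens'[OF assms(1) eventually_conj[OF assms(2,3)]] by auto

lemma weight_swap: "weight R B H = - weight B R H"
  unfolding weight_def by simp

lemma transition_swap: "transition R B c t0 (- a) (- a') \<longleftrightarrow> transition B R c t0 a a'"
  unfolding transition_def rot_weight_def weight_swap[of R] by simp

lemma balanced_swap: "balanced R B (- e) t c \<longleftrightarrow> balanced B R e t c"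
  unfolding balanced_def weight_swap[of R] by (auto simp: Un_commute)

locale rotation_at =
  fixes P Q :: "pt set" and k :: nat and c :: "real \<Rightarrow> real" and t0 :: real
  assumes finite_P: "finite P" and finite_Q: "finite Q" and disjoint: "P \<inter> Q = {}"
    and general_pos: "general_position (P \<union> Q)"
    and rotation: "is_rotation P k c" and t0: "t0 \<in> {0..2*pi}"
begin

abbreviation line_at :: "real \<Rightarrow> pt set" where
  "line_at t \<equiv> dline t (cyc c t)"

abbreviation right_at :: "real \<Rightarrow> pt set" where
  "right_at t \<equiv> right_hp t (cyc c t)"

abbreviation left_at :: "real \<Rightarrow> pt set" where
  "left_at t \<equiv> left_hp t (cyc c t)"

definition near :: "real \<Rightarrow> bool" where
  "near t \<longleftrightarrow> t \<noteq> t0 \<and> \<bar>t - t0\<bar> < pi \<and>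
     (\<forall>s \<in> (P \<union> Q) - line_at t0. s \<notin> line_at t \<and> (s \<in> right_at t \<longleftrightarrow> s \<in> right_at t0))"

lemma eventually_near: "\<forall>\<^sub>F t in at t0. near t"
proof -
  have "isCont (cyc c) t0"
    using rotation t0 unfolding is_rotation_def by (blast intro: isCont_cyc)
  then have "\<forall>\<^sub>F t in at t0. \<forall>s \<in> (P \<union> Q) - line_at t0.
      s \<notin> line_at t \<and> (s \<in> right_at t \<longleftrightarrow> s \<in> right_at t0)"
    using finite_P finite_Q by (intro eventually_ball_finite ballI eventually_same_side) auto
  moreover have "\<forall>\<^sub>F t in at t0. t \<noteq> t0 \<and> \<bar>t - t0\<bar> < pi"
    unfolding eventually_at by (intro exI[of _ pi]) (auto simp: dist_real_def)
  ultimately show ?thesis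
    unfolding near_def by eventually_elim blast
qed

lemma exists_near: "\<exists>t. near t"
  using eventually_happens'[OF _ eventually_near] by simp

lemma near_pivot_card:
  assumes "near t"
  shows "card (P \<inter> line_at t) = 1"
proof -
  have "card (P \<inter> line_at t) \<noteq> 2"
  proof
    assume "card (P \<inter> line_at t) = 2"
    then obtain p q where "p \<noteq> q" and pq: "P \<inter> line_at t = {p, q}"
      by (auto simp: card_2_iff)
    moreover have "p \<in> line_at t" "q \<in> line_at t"
      using pq by auto
    moreover have "p \<in> line_at t0" "q \<in> line_at t0"
      using assms pq unfolding near_def by blast+
    ultimately show False
      using nval_eq_at_two_angles_imp_eq[of t0 p q t] assms
      unfolding near_def dline_def by auto
  qed
  then show ?thesis
    using rotation_line_card[OF rotation, of t] by simp
qed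

lemma near_card_P_right:
  assumes "near t"
  shows "card (P \<inter> right_at t) = k"
  using rotation_right_card[OF rotation near_pivot_card[OF assms]] .

lemma near_weight:
  assumes "near t"
  shows "weight Q P (right_at t) =
    int (card (Q \<inter> right_at t0)) + int (card (Q \<inter> line_at t0 \<inter> right_at t)) - int k"
proof -
  have "Q \<inter> right_at t = Q \<inter> right_at t0 \<union> Q \<inter> line_at t0 \<inter> right_at t"
    using assms unfolding near_def by (auto simp: dline_def right_hp_def)
  moreover have "Q \<inter> right_at t0 \<inter> (Q \<inter> line_at t0 \<inter> right_at t) = {}"
    by (auto simp: dline_def right_hp_def)
  ultimately have "card (Q \<inter> right_at t) =
      card (Q \<inter> right_at t0) + card (Q \<inter> line_at t0 \<inter> right_at t)"
    using finite_Q by (simp add: card_Un_disjoint)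
  then show ?thesis
    unfolding weight_def near_card_P_right[OF assms] by simp
qed

lemma one_sided_values_mem:
  assumes "\<And>t. near t \<Longrightarrow> weight Q P (right_at t) \<in> X"
    and "\<forall>\<^sub>F t in at_left t0. weight Q P (right_at t) = a"
    and "\<forall>\<^sub>F t in at_right t0. weight Q P (right_at t) = a'"
  shows "a \<in> X" and "a' \<in> X"
proof -
  have "\<forall>\<^sub>F t in at t0. weight Q P (right_at t) \<in> X"
    using eventually_near by eventually_elim (rule assms(1))
  then have left: "\<forall>\<^sub>F t in at_left t0. weight Q P (right_at t) \<in> X"
    and right: "\<forall>\<^sub>F t in at_right t0. weight Q P (right_at t) \<in> X"
    by (simp_all add: eventually_at_split)
  show "a \<in> X"
    by (rule eventually_value_mem[OF _ assms(2) left]) simp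
  show "a' \<in> X"
    by (rule eventually_value_mem[OF _ assms(3) right]) simp
qed

lemma transition_line_meets_Q:
  assumes "\<forall>\<^sub>F t in at_left t0. weight Q P (right_at t) = a"
    and "\<forall>\<^sub>F t in at_right t0. weight Q P (right_at t) = a'" and "a \<noteq> a'"
  shows "Q \<inter> line_at t0 \<noteq> {}"
proof
  assume empty: "Q \<inter> line_at t0 = {}"
  have "a \<in> {int (card (Q \<inter> right_at t0)) - int k}" "a' \<in> {int (card (Q \<inter> right_at t0)) - int k}"
    using one_sided_values_mem[where X = "{int (card (Q \<inter> right_at t0)) - int k}", OF _ assms(1,2)]
    by (simp_all add: near_weight empty)
  with assms(3) show False by simp
qed

lemma line_meets_P: "P \<inter> line_at t0 \<noteq> {}"
  using rotation_line_card[OF rotation, of t0] by auto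

lemma line_points:
  assumes "Q \<inter> line_at t0 \<noteq> {}"
  obtains p b where "P \<inter> line_at t0 = {p}" and "Q \<inter> line_at t0 = {b}"
proof -
  obtain p b where p: "p \<in> P \<inter> line_at t0" and b: "b \<in> Q \<inter> line_at t0"
    using assms line_meets_P by blast
  have "x = p" if "x \<in> P \<inter> line_at t0" for x
    using general_position_no_three_on_dline[OF general_pos, of p b x t0 "cyc c t0"] p b that disjoint by auto
  moreover have "x = b" if "x \<in> Q \<inter> line_at t0" for x
    using general_position_no_three_on_dline[OF general_pos, of p b x t0 "cyc c t0"] p b that disjoint by auto
  ultimately show thesis
    using that p b by blast
qed

lemma card_P_right_t0:
  assumes "P \<inter> line_at t0 = {p}"
  shows "card (P \<inter> right_at t0) = k"
proof -
  obtain t where t: "near t"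
    using exists_near ..
  then obtain x where "P \<inter> line_at t = {x}"
    using near_pivot_card card_1_singletonE by blast
  moreover have "P \<inter> line_at t \<subseteq> P \<inter> line_at t0"
    using t unfolding near_def by blast
  ultimately have "p \<in> line_at t"
    using assms by auto
  moreover have "s \<in> right_at t \<longleftrightarrow> s \<in> right_at t0" if "s \<in> P" "s \<noteq> p" for s
    using t assms that unfolding near_def by blast
  moreover have "p \<notin> right_at t" "p \<notin> right_at t0"
    using \<open>p \<in> line_at t\<close> assms by (auto simp: dline_def right_hp_def)
  ultimately have "P \<inter> right_at t = P \<inter> right_at t0"
    by blast
  then show ?thesis
    using near_card_P_right[OF t] by simp
qed

lemma near_weight_range:
  assumes "P \<inter> line_at t0 = {p}" and "Q \<inter> line_at t0 = {b}" and "near t"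
  shows "weight Q P (right_at t) \<in> {weight Q P (right_at t0), weight Q P (right_at t0) + 1}"
proof -
  have "card (Q \<inter> line_at t0 \<inter> right_at t) \<le> card {b}"
    using assms(2) by (intro card_mono) auto
  then show ?thesis
    using near_weight[OF assms(3)] card_P_right_t0[OF assms(1)] unfolding weight_def by auto
qed

lemma transition_balanced:
  assumes total: "int (card Q) = int (card P) + 2 * e"
    and trans: "transition Q P c t0 e (e + 1) \<or> transition Q P c t0 (e + 1) e"
  shows "balanced Q P e t0 (cyc c t0)"
proof -
  obtain a a' where
    left: "\<forall>\<^sub>F t in at_left t0. weight Q P (right_at t) = a" and
    right: "\<forall>\<^sub>F t in at_right t0. weight Q P (right_at t) = a'" and
    aa': "{a, a'} = {e, e + 1}"
    using trans unfolding transition_def rot_weight_def by blast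
  then have "Q \<inter> line_at t0 \<noteq> {}"
    by (intro transition_line_meets_Q[OF left right]) (auto simp: doubleton_eq_iff)
  then obtain p b where p: "P \<inter> line_at t0 = {p}" and b: "Q \<inter> line_at t0 = {b}"
    by (rule line_points)
  define w where "w = weight Q P (right_at t0)"
  have "a \<in> {w, w + 1}" "a' \<in> {w, w + 1}"
    using one_sided_values_mem[where X = "{w, w + 1}", OF _ left right] near_weight_range[OF p b]
    unfolding w_def by blast+
  with aa' have right_weight: "weight Q P (right_at t0) = e"
    unfolding w_def by (auto simp: doubleton_eq_iff)
  have "int (card P) = int (card (P \<inter> right_at t0)) + int (card (P \<inter> left_at t0)) + 1"
    using card_split_by_dline[OF finite_P, of t0 "cyc c t0"] p by simp
  moreover have "int (card Q) = int (card (Q \<inter> right_at t0)) + int (card (Q \<inter> left_at t0)) + 1"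
    using card_split_by_dline[OF finite_Q, of t0 "cyc c t0"] b by simp
  ultimately have "weight Q P (left_at t0) = e"
    using total right_weight unfolding weight_def by linarith
  moreover have "p \<noteq> b"
    using p b disjoint by auto
  ultimately show ?thesis
    using p b right_weight unfolding balanced_def by blast
qed

end

theorem lemma1:
  fixes B R :: "pt set" and \<delta> :: int and k :: nat
  assumes "finite B" and "finite R" and "B \<inter> R = {}"
    and "general_position (B \<union> R)"
    and "inj_on fst (B \<union> R)"
    and "\<delta> \<ge> 0"
    and "int (card B) = int (card R) + 2 * \<delta>"
  shows "(\<forall>c t0. is_rotation R k c \<and> t0 \<in> {0..2*pi} \<and>
            (transition B R c t0 \<delta> (\<delta> + 1) \<or> transition B R c t0 (\<delta> + 1) \<delta>)
            \<longrightarrow> balanced B R \<delta> t0 (cyc c t0))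
       \<and> (\<forall>c t0. is_rotation B k c \<and> t0 \<in> {0..2*pi} \<and>
            (transition B R c t0 \<delta> (\<delta> - 1) \<or> transition B R c t0 (\<delta> - 1) \<delta>)
            \<longrightarrow> balanced B R \<delta> t0 (cyc c t0))"
proof (intro conjI allI impI)
  fix c t0
  assume rot: "is_rotation R k c \<and> t0 \<in> {0..2*pi} \<and>
    (transition B R c t0 \<delta> (\<delta> + 1) \<or> transition B R c t0 (\<delta> + 1) \<delta>)"
  interpret rotation_at R B k c t0
    using assms rot by unfold_locales (auto simp: Un_commute)
  show "balanced B R \<delta> t0 (cyc c t0)"
    using transition_balanced assms(7) rot by blast
next
  fix c t0
  assume rot: "is_rotation B k c \<and> t0 \<in> {0..2*pi} \<and>
    (transition B R c t0 \<delta> (\<delta> - 1) \<or> transition B R c t0 (\<delta> - 1) \<delta>)"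
  interpret rotation_at B R k c t0
    using assms rot by unfold_locales auto
  have "transition R B c t0 (- \<delta>) (- \<delta> + 1) \<or> transition R B c t0 (- \<delta> + 1) (- \<delta>)"
    using rot transition_swap[of R B c t0] by (metis minus_diff_eq uminus_add_conv_diff)
  then have "balanced R B (- \<delta>) t0 (cyc c t0)"
    using transition_balanced assms(7) by simp
  then show "balanced B R \<delta> t0 (cyc c t0)"
    by (simp add: balanced_swap)
qed

end
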